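(* Let $A=[a_1,\dots,a_N]$ and $B=[b_1,\dots,b_N]$ be $N\times N$ complex matrices with columns $a_i,b_i$, let $\theta$ be a real parameter, and let $M(\theta)=(1-\theta)A+\theta B$ with columns $m_k(\theta)=(1-\theta)a_k+\theta b_k$. Define recursively (the modified, unnormalized Gram–Schmidt procedure) $z_1=v_1=m_1$ and, for $k\ge 2$, \[ v_k=m_k-\sum_{j=1}^{k-1}\frac{\langle z_j,m_k\rangle}{\|z_j\|^2}\,z_j,\qquad z_k=\Big(\prod_{j=1}^{k-1}\|z_j\|^2\Big)\,v_k . \] Then for every $k\in\{1,\dots,N\}$, $v_k(\theta)\in\mathbf{p}_{D_k+1}(\theta)/q_{D_k}(\theta)$, where $D_k=3^{k-1}-1$; that is, $v_k(\theta)$ can be written as a vector whose entries are polynomials in $\theta$ of degree at most $D_k+1$ divided by a common polynomial in $\theta$ of degree at most $D_k$.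
   Context: $\langle x,y\rangle=\sum_i \overline{x_i}y_i$ is the standard inner product on $\mathbb{C}^N$ and $\|x\|^2=\langle x,x\rangle$; since $\theta$ is real, $\langle z_j,m_k\rangle$ and $\|z_j\|^2$ are polynomials in $\theta$ with complex coefficients. Notation: $\mathbf{p}_\ell(\theta)$ denotes vectors each of whose entries is a polynomial of degree $\ell$ in $\theta$, $q_r(\theta)$ denotes polynomial functions of degree $r$ in $\theta$, and $\mathbf{p}_\ell(\theta)/q_r(\theta)$ denotes vectors of rational functions with numerators of degree $\ell$ and denominators of degree $r$. *)

theory Defs
  imports Complex_Main "HOL-Computational_Algebra.Polynomial"
begin

text \<open>Vectors in C^N are functions nat => complex, entries indexed by 1..N.
  A matrix is given by its columns: a k is the k-th column (k = 1..N).\<close>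

definition cinner :: "nat \<Rightarrow> (nat \<Rightarrow> complex) \<Rightarrow> (nat \<Rightarrow> complex) \<Rightarrow> complex" where
  "cinner N x y = (\<Sum>i=1..N. cnj (x i) * y i)"

definition cnormsq :: "nat \<Rightarrow> (nat \<Rightarrow> complex) \<Rightarrow> real" where
  "cnormsq N x = (\<Sum>i=1..N. (cmod (x i))\<^sup>2)"

definition mcol :: "(nat \<Rightarrow> nat \<Rightarrow> complex) \<Rightarrow> (nat \<Rightarrow> nat \<Rightarrow> complex) \<Rightarrow> real \<Rightarrow> nat \<Rightarrow> nat \<Rightarrow> complex" where
  "mcol a b \<theta> k i = (1 - complex_of_real \<theta>) * a k i + complex_of_real \<theta> * b k i"

primrec gs :: "nat \<Rightarrow> (nat \<Rightarrow> nat \<Rightarrow> complex) \<Rightarrow> (nat \<Rightarrow> nat \<Rightarrow> complex) \<Rightarrow> real \<Rightarrow> nat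
    \<Rightarrow> ((nat \<Rightarrow> complex) \<times> (nat \<Rightarrow> complex)) list" where
  "gs N a b \<theta> 0 = []"
| "gs N a b \<theta> (Suc n) =
     (let prev = gs N a b \<theta> n;
          zs = map snd prev;
          mk = mcol a b \<theta> (Suc n);
          v = (\<lambda>i. mk i - (\<Sum>z\<leftarrow>zs. cinner N z mk / complex_of_real (cnormsq N z) * z i));
          z = (\<lambda>i. complex_of_real (\<Prod>w\<leftarrow>zs. cnormsq N w) * v i)
      in prev @ [(v, z)])"

definition gs_v :: "nat \<Rightarrow> (nat \<Rightarrow> nat \<Rightarrow> complex) \<Rightarrow> (nat \<Rightarrow> nat \<Rightarrow> complex) \<Rightarrow> real \<Rightarrow> nat \<Rightarrow> (nat \<Rightarrow> complex)" where
  "gs_v N a b \<theta> k = fst (gs N a b \<theta> k ! (k - 1))"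

definition gs_z :: "nat \<Rightarrow> (nat \<Rightarrow> nat \<Rightarrow> complex) \<Rightarrow> (nat \<Rightarrow> nat \<Rightarrow> complex) \<Rightarrow> real \<Rightarrow> nat \<Rightarrow> (nat \<Rightarrow> complex)" where
  "gs_z N a b \<theta> k = snd (gs N a b \<theta> k ! (k - 1))"

end

theory Submission
  imports Defs
begin

text \<open>By induction on k, the unnormalised vectors z_k have polynomial entries of degree at most
  3^(k-1): multiplying v_k by the product of the ||z_j||^2, j < k, clears all its denominators,
  and since deg ||z_j||^2 <= 2 * 3^(j-1) the degree of z_k is at most
  1 + sum_(j<k) 2 * 3^(j-1) = 3^(k-1). The same product, with the factors of vanishing z_j
  left out so that it is a nonzero polynomial, is a common denominator of degree at most
  3^(k-1) - 1 for v_k.\<close>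

lemma prod_mult_sum_divide:
  fixes c d w :: "'j \<Rightarrow> 'a::field"
  assumes "finite S"
    and "\<And>j. j \<in> J \<Longrightarrow> j \<in> S \<Longrightarrow> d j = 0 \<Longrightarrow> w j = 0"
    and "\<And>j. j \<in> J \<Longrightarrow> j \<notin> S \<Longrightarrow> w j = 0"
  shows "(\<Prod>l\<in>S. d l) * (\<Sum>j\<in>J. c j / d j * w j) = (\<Sum>j\<in>J. c j * (\<Prod>l\<in>S - {j}. d l) * w j)"
proof -
  have "(\<Prod>l\<in>S. d l) * (c j / d j * w j) = c j * (\<Prod>l\<in>S - {j}. d l) * w j" if j: "j \<in> J" for j
  proof (cases "j \<in> S")
    case True
    then have "(\<Prod>l\<in>S. d l) = d j * (\<Prod>l\<in>S - {j}. d l)"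
      using assms(1) by (simp add: prod.remove)
    then show ?thesis
      using assms(2)[OF j True] by (cases "d j = 0") (simp_all add: field_simps)
  next
    case False
    then show ?thesis using assms(3)[OF j] by simp
  qed
  then show ?thesis by (simp add: sum_distrib_left)
qed

lemma sum_two_mult_power3_less:
  assumes "S \<subseteq> {..<n}"
  shows "(\<Sum>l\<in>S. 2 * 3 ^ l) < (3::nat) ^ n"
proof -
  have "(\<Sum>l<n. 2 * 3 ^ l) + 1 = (3::nat) ^ n"
    by (induction n) auto
  moreover have "(\<Sum>l\<in>S. 2 * 3 ^ l) \<le> (\<Sum>l<n. 2 * (3::nat) ^ l)"
    using assms by (intro sum_mono2) auto
  ultimately show ?thesis by linarith
qed

lemma ex_real_not_root:
  fixes p :: "complex poly"
  assumes "p \<noteq> 0"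
  obtains t :: real where "poly p (complex_of_real t) \<noteq> 0"
proof -
  have "\<not> range complex_of_real \<subseteq> {x. poly p x = 0}"
    using poly_roots_finite[OF assms] finite_subset finite_imageD[OF _ inj_of_real]
      infinite_UNIV_char_0 by blast
  then show ?thesis using that by blast
qed

definition poly_rep :: "nat \<Rightarrow> (nat \<Rightarrow> complex poly) \<Rightarrow> (real \<Rightarrow> nat \<Rightarrow> complex) \<Rightarrow> bool" where
  "poly_rep N X x \<longleftrightarrow> (\<forall>t. \<forall>i\<in>{1..N}. x t i = poly (X i) (complex_of_real t))"

definition mcol_poly :: "(nat \<Rightarrow> nat \<Rightarrow> complex) \<Rightarrow> (nat \<Rightarrow> nat \<Rightarrow> complex) \<Rightarrow> nat \<Rightarrow> nat \<Rightarrow> complex poly" where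
  "mcol_poly a b k i = [:a k i, b k i - a k i:]"

definition pinner :: "nat \<Rightarrow> (nat \<Rightarrow> complex poly) \<Rightarrow> (nat \<Rightarrow> complex poly) \<Rightarrow> complex poly" where
  "pinner N X Y = (\<Sum>i=1..N. map_poly cnj (X i) * Y i)"

lemma poly_rep_mcol_poly: "poly_rep N (mcol_poly a b k) (\<lambda>t. mcol a b t k)"
  by (simp add: poly_rep_def mcol_poly_def mcol_def algebra_simps)

lemma degree_mcol_poly: "degree (mcol_poly a b k i) \<le> 1"
  by (simp add: mcol_poly_def)

lemma poly_pinner:
  assumes "poly_rep N X x" and "poly_rep N Y y"
  shows "poly (pinner N X Y) (complex_of_real t) = cinner N (x t) (y t)"
  using assms unfolding poly_rep_def pinner_def cinner_def poly_sum
  by (intro sum.cong) auto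

lemma cinner_self: "cinner N x x = complex_of_real (cnormsq N x)"
  unfolding cinner_def cnormsq_def of_real_sum
  by (rule sum.cong) (simp_all only: complex_norm_square mult.commute)

lemma cnormsq_eq_0_iff: "cnormsq N x = 0 \<longleftrightarrow> (\<forall>i\<in>{1..N}. x i = 0)"
  unfolding cnormsq_def by (subst sum_nonneg_eq_0_iff) auto

lemma degree_pinner:
  assumes "\<And>i. degree (X i) \<le> dx" and "\<And>i. degree (Y i) \<le> dy"
  shows "degree (pinner N X Y) \<le> dx + dy"
  unfolding pinner_def
proof (rule degree_sum_le)
  fix i
  have "degree (map_poly cnj (X i) * Y i) \<le> degree (X i) + degree (Y i)"
    using degree_mult_le[of "map_poly cnj (X i)" "Y i"] by (simp add: degree_map_poly)
  then show "degree (map_poly cnj (X i) * Y i) \<le> dx + dy"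
    using add_mono[OF assms] by (rule order_trans)
qed simp

lemma pinner_self_eq_0_iff: "pinner N X X = 0 \<longleftrightarrow> (\<forall>i\<in>{1..N}. X i = 0)"
proof
  assume "pinner N X X = 0"
  show "\<forall>i\<in>{1..N}. X i = 0"
  proof (rule ccontr)
    assume "\<not> ?thesis"
    then obtain i where i: "i \<in> {1..N}" "X i \<noteq> 0" by blast
    from i(2) obtain t where "poly (X i) (complex_of_real t) \<noteq> 0" by (rule ex_real_not_root)
    moreover have "poly_rep N X (\<lambda>t i. poly (X i) (complex_of_real t))"
      by (simp add: poly_rep_def)
    ultimately have "poly (pinner N X X) (complex_of_real t) \<noteq> 0"
      using i by (auto simp: poly_pinner cinner_self cnormsq_eq_0_iff)
    with \<open>pinner N X X = 0\<close> show False by simp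
  qed
qed (simp add: pinner_def)

lemma length_gs: "length (gs N a b t n) = n"
  by (induction n) (simp_all add: Let_def)

lemma gs_nth_stable: "j < n \<Longrightarrow> gs N a b t n ! j = gs N a b t (Suc j) ! j"
proof (induction n)
  case (Suc n)
  show ?case
  proof (cases "j < n")
    case True
    then show ?thesis using Suc by (simp add: Let_def nth_append length_gs)
  next
    case False
    then show ?thesis using Suc.prems by (simp add: less_Suc_eq)
  qed
qed simp

lemma map_snd_gs: "map snd (gs N a b t n) = map (\<lambda>j. gs_z N a b t (Suc j)) [0..<n]"
  by (rule nth_equalityI) (simp_all add: length_gs gs_z_def gs_nth_stable)

lemma gs_Suc_nth:
  "gs N a b t (Suc n) ! n =
     (let v = (\<lambda>i. mcol a b t (Suc n) i - (\<Sum>j<n.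
                 cinner N (gs_z N a b t (Suc j)) (mcol a b t (Suc n))
                 / complex_of_real (cnormsq N (gs_z N a b t (Suc j))) * gs_z N a b t (Suc j) i))
      in (v, \<lambda>i. complex_of_real (\<Prod>j<n. cnormsq N (gs_z N a b t (Suc j))) * v i))"
  unfolding gs.simps Let_def
  unfolding map_snd_gs map_map
  by (simp add: nth_append length_gs comp_def atLeast0LessThan
      flip: sum.distinct_set_conv_list prod.distinct_set_conv_list)

lemma gs_v_Suc:
  "gs_v N a b t (Suc n) i = mcol a b t (Suc n) i - (\<Sum>j<n.
     cinner N (gs_z N a b t (Suc j)) (mcol a b t (Suc n))
     / complex_of_real (cnormsq N (gs_z N a b t (Suc j))) * gs_z N a b t (Suc j) i)"
  by (simp only: gs_v_def gs_Suc_nth Let_def diff_Suc_1 fst_conv)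

lemma gs_z_Suc:
  "gs_z N a b t (Suc n) i =
     complex_of_real (\<Prod>j<n. cnormsq N (gs_z N a b t (Suc j))) * gs_v N a b t (Suc n) i"
  by (subst gs_z_def) (simp only: gs_Suc_nth gs_v_Suc Let_def diff_Suc_1 snd_conv)

text \<open>Z j represents z_(j+1). Only the factors ||z_(j+1)||^2 with j in S are cleared; for
  j not in S the polynomial vector Z j must vanish, so that its term in v_(n+1), a quotient by
  zero, is zero as well.\<close>

definition gs_den :: "nat \<Rightarrow> (nat \<Rightarrow> nat \<Rightarrow> complex poly) \<Rightarrow> nat set \<Rightarrow> complex poly" where
  "gs_den N Z S = (\<Prod>j\<in>S. pinner N (Z j) (Z j))"

definition gs_num :: "nat \<Rightarrow> (nat \<Rightarrow> nat \<Rightarrow> complex) \<Rightarrow> (nat \<Rightarrow> nat \<Rightarrow> complex)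
    \<Rightarrow> (nat \<Rightarrow> nat \<Rightarrow> complex poly) \<Rightarrow> nat set \<Rightarrow> nat \<Rightarrow> nat \<Rightarrow> complex poly" where
  "gs_num N a b Z S n i = gs_den N Z S * mcol_poly a b (Suc n) i -
     (\<Sum>j<n. pinner N (Z j) (mcol_poly a b (Suc n)) * gs_den N Z (S - {j}) * Z j i)"

lemma degree_gs_den:
  assumes "finite S" and "\<And>j i. j \<in> S \<Longrightarrow> degree (Z j i) \<le> 3 ^ j"
  shows "degree (gs_den N Z S) \<le> (\<Sum>j\<in>S. 2 * 3 ^ j)"
proof -
  have "degree (gs_den N Z S) \<le> (\<Sum>j\<in>S. degree (pinner N (Z j) (Z j)))"
    unfolding gs_den_def using degree_prod_sum_le[OF assms(1)] by (simp add: comp_def)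
  also have "\<dots> \<le> (\<Sum>j\<in>S. 2 * 3 ^ j)"
    using degree_pinner[of "Z _" "3 ^ _"] assms(2) by (intro sum_mono) (simp add: mult_2)
  finally show ?thesis .
qed

lemma degree_gs_num:
  assumes "S \<subseteq> {..<n}" and "\<And>j i. j < n \<Longrightarrow> degree (Z j i) \<le> 3 ^ j"
  shows "degree (gs_num N a b Z S n i) \<le> 3 ^ n"
  unfolding gs_num_def
proof (rule degree_diff_le)
  have den: "degree (gs_den N Z T) \<le> (\<Sum>j\<in>T. 2 * 3 ^ j)" if "T \<subseteq> S" for T
    using assms that by (intro degree_gs_den) (auto dest: finite_subset)
  have "degree (gs_den N Z S * mcol_poly a b (Suc n) i) \<le> (\<Sum>j\<in>S. 2 * 3 ^ j) + 1"
    using degree_mult_le[of "gs_den N Z S"] degree_mcol_poly[of a b "Suc n" i] den[of S]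
    by (meson add_mono order_trans order_refl)
  then show "degree (gs_den N Z S * mcol_poly a b (Suc n) i) \<le> 3 ^ n"
    using sum_two_mult_power3_less[OF assms(1)] by linarith
  show "degree (\<Sum>j<n. pinner N (Z j) (mcol_poly a b (Suc n)) * gs_den N Z (S - {j}) * Z j i) \<le> 3 ^ n"
  proof (rule degree_sum_le)
    fix j assume "j \<in> {..<n}"
    then have j: "j < n" by simp
    let ?c = "pinner N (Z j) (mcol_poly a b (Suc n))"
    have "degree (?c * gs_den N Z (S - {j}) * Z j i)
        \<le> degree ?c + degree (gs_den N Z (S - {j})) + degree (Z j i)"
      by (meson add_le_mono degree_mult_le le_refl order_trans)
    also have "\<dots> \<le> (3 ^ j + 1) + (\<Sum>l\<in>S - {j}. 2 * 3 ^ l) + 3 ^ j"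
      using degree_pinner[of "Z j" "3 ^ j" "mcol_poly a b (Suc n)" 1 N] degree_mcol_poly
        assms(2)[OF j] den[of "S - {j}"]
      by (intro add_mono) auto
    also have "\<dots> = (\<Sum>l\<in>insert j S. 2 * 3 ^ l) + 1"
      using assms(1) by (simp add: sum.insert_remove finite_subset)
    also have "\<dots> \<le> 3 ^ n"
      using sum_two_mult_power3_less[of "insert j S" n] assms(1) j by auto
    finally show "degree (?c * gs_den N Z (S - {j}) * Z j i) \<le> 3 ^ n" .
  qed simp
qed

lemma poly_gs_den:
  assumes "\<And>j. j \<in> S \<Longrightarrow> poly_rep N (Z j) (z j)"
  shows "poly (gs_den N Z S) (complex_of_real t) = (\<Prod>j\<in>S. complex_of_real (cnormsq N (z j t)))"
  unfolding gs_den_def poly_prod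
  using poly_pinner[OF assms assms] by (intro prod.cong) (simp_all add: cinner_self)

lemma poly_gs_num:
  assumes rep: "\<And>j. j < n \<Longrightarrow> poly_rep N (Z j) (\<lambda>t. gs_z N a b t (Suc j))"
    and S: "S \<subseteq> {..<n}"
    and vanish: "\<And>j. j < n \<Longrightarrow> j \<notin> S \<Longrightarrow> \<forall>i\<in>{1..N}. Z j i = 0"
    and i: "i \<in> {1..N}"
  shows "poly (gs_den N Z S) (complex_of_real t) * gs_v N a b t (Suc n) i
       = poly (gs_num N a b Z S n i) (complex_of_real t)"
proof -
  define z where "z j = gs_z N a b t (Suc j)" for j
  define m where "m = mcol a b t (Suc n)"
  define d where "d j = complex_of_real (cnormsq N (z j))" for j
  define c where "c j = cinner N (z j) m" for j
  have den: "poly (gs_den N Z T) (complex_of_real t) = (\<Prod>j\<in>T. d j)" if "T \<subseteq> S" for T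
    using that S rep unfolding d_def z_def by (intro poly_gs_den) auto
  have Z: "poly (Z j i) (complex_of_real t) = z j i" if "j < n" for j
    using rep[OF that] i unfolding poly_rep_def z_def by simp
  have pinner_m: "poly (pinner N (Z j) (mcol_poly a b (Suc n))) (complex_of_real t) = c j" if "j < n" for j
    unfolding c_def z_def m_def using rep[OF that] poly_rep_mcol_poly by (rule poly_pinner)
  have "poly (gs_den N Z S) (complex_of_real t) * gs_v N a b t (Suc n) i
      = (\<Prod>j\<in>S. d j) * (m i - (\<Sum>j<n. c j / d j * z j i))"
    by (simp add: den gs_v_Suc z_def m_def d_def c_def)
  also have "\<dots> = (\<Prod>j\<in>S. d j) * m i - (\<Sum>j<n. c j * (\<Prod>l\<in>S - {j}. d l) * z j i)"
  proof -
    have "(\<Prod>j\<in>S. d j) * (\<Sum>j<n. c j / d j * z j i) = (\<Sum>j<n. c j * (\<Prod>l\<in>S - {j}. d l) * z j i)"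
    proof (rule prod_mult_sum_divide)
      show "finite S" using S finite_subset by blast
      show "z j i = 0" if "d j = 0" for j
        using that i by (simp add: d_def cnormsq_eq_0_iff)
      show "z j i = 0" if "j \<in> {..<n}" "j \<notin> S" for j
        using Z[of j] vanish[of j] that i by simp
    qed
    then show ?thesis by (simp add: right_diff_distrib)
  qed
  also have "\<dots> = poly (gs_num N a b Z S n i) (complex_of_real t)"
    unfolding gs_num_def poly_diff poly_mult poly_sum
    using poly_rep_mcol_poly[of N a b "Suc n"] i
    by (simp add: den Z pinner_m poly_rep_def m_def)
  finally show ?thesis .
qed

lemma gs_z_poly_rep:
  "\<exists>Z. \<forall>j<n. (\<forall>i. degree (Z j i) \<le> 3 ^ j) \<and> poly_rep N (Z j) (\<lambda>t. gs_z N a b t (Suc j))"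
proof (induction n)
  case (Suc n)
  then obtain Z where deg: "\<And>j i. j < n \<Longrightarrow> degree (Z j i) \<le> 3 ^ j"
    and rep: "\<And>j. j < n \<Longrightarrow> poly_rep N (Z j) (\<lambda>t. gs_z N a b t (Suc j))"
    by blast
  have "poly_rep N (gs_num N a b Z {..<n} n) (\<lambda>t. gs_z N a b t (Suc n))"
    unfolding poly_rep_def
  proof (intro allI ballI)
    fix t i assume i: "i \<in> {1..N}"
    have "poly (gs_den N Z {..<n}) (complex_of_real t)
        = (\<Prod>j<n. complex_of_real (cnormsq N (gs_z N a b t (Suc j))))"
      using rep by (intro poly_gs_den) auto
    then have "gs_z N a b t (Suc n) i = poly (gs_den N Z {..<n}) (complex_of_real t) * gs_v N a b t (Suc n) i"
      by (simp add: gs_z_Suc)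
    also have "\<dots> = poly (gs_num N a b Z {..<n} n i) (complex_of_real t)"
      using rep i by (intro poly_gs_num) auto
    finally show "gs_z N a b t (Suc n) i = poly (gs_num N a b Z {..<n} n i) (complex_of_real t)" .
  qed
  moreover have "degree (gs_num N a b Z {..<n} n i) \<le> 3 ^ n" for i
    using deg by (intro degree_gs_num) auto
  ultimately show ?case
    using deg rep by (intro exI[of _ "Z(n := gs_num N a b Z {..<n} n)"]) (auto simp: less_Suc_eq)
qed simp

theorem lemma5:
  fixes N :: nat and a b :: "nat \<Rightarrow> nat \<Rightarrow> complex" and k :: nat
  assumes "1 \<le> k" and "k \<le> N"
  shows "\<exists>(p :: nat \<Rightarrow> complex poly) (q :: complex poly).
           q \<noteq> 0 \<and> degree q \<le> 3 ^ (k - 1) - 1 \<and>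
           (\<forall>i\<in>{1..N}. degree (p i) \<le> 3 ^ (k - 1)) \<and>
           (\<forall>\<theta>::real. poly q (complex_of_real \<theta>) \<noteq> 0 \<longrightarrow>
              (\<forall>i\<in>{1..N}. gs_v N a b \<theta> k i
                 = poly (p i) (complex_of_real \<theta>) / poly q (complex_of_real \<theta>)))"
proof -
  obtain n where k: "k = Suc n" using assms(1) by (cases k) auto
  obtain Z where deg: "\<And>j i. j < n \<Longrightarrow> degree (Z j i) \<le> 3 ^ j"
    and rep: "\<And>j. j < n \<Longrightarrow> poly_rep N (Z j) (\<lambda>t. gs_z N a b t (Suc j))"
    using gs_z_poly_rep[of n N a b] by blast
  define S where "S = {j. j < n \<and> (\<exists>i\<in>{1..N}. Z j i \<noteq> 0)}"
  define q where "q = gs_den N Z S"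
  define p where "p = gs_num N a b Z S n"
  have S: "S \<subseteq> {..<n}" "finite S" unfolding S_def by auto
  have vanish: "\<And>j. j < n \<Longrightarrow> j \<notin> S \<Longrightarrow> \<forall>i\<in>{1..N}. Z j i = 0"
    unfolding S_def by blast
  have "pinner N (Z j) (Z j) \<noteq> 0" if "j \<in> S" for j
    using that unfolding S_def by (simp add: pinner_self_eq_0_iff)
  then have "q \<noteq> 0"
    unfolding q_def gs_den_def using S(2) by simp
  moreover have "degree q \<le> 3 ^ n - 1"
    using degree_gs_den[OF S(2), of Z N] sum_two_mult_power3_less[OF S(1)] S(1) deg
    unfolding q_def by fastforce
  moreover have "degree (p i) \<le> 3 ^ n" for i
    unfolding p_def using S(1) deg by (rule degree_gs_num)
  moreover have "gs_v N a b t (Suc n) i = poly (p i) (complex_of_real t) / poly q (complex_of_real t)"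
    if "poly q (complex_of_real t) \<noteq> 0" "i \<in> {1..N}" for t i
    using poly_gs_num[OF rep S(1) vanish that(2), of t] that(1)
    unfolding p_def q_def by (simp add: eq_divide_eq mult.commute)
  ultimately show ?thesis
    unfolding k by (intro exI[of _ p] exI[of _ q]) auto
qed

end
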